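(* Let $T$ be a continuous linear operator on a real or complex separable infinite-dimensional F-space $X$, and let $x$ be a recurrent vector of $T$. Then $x\in\mathrm{span}(\mathcal{E}(T))$ if and only if $\mathrm{span}\{T^nx:n\geq0\}$ is finite-dimensional. Consequently, for every Furstenberg family $\mathcal{F}$ with $\mathcal{F}\mathrm{Rec}(T)\setminus\mathrm{span}(\mathcal{E}(T))\neq\varnothing$, there exists an infinite-dimensional $T$-invariant vector subspace $Z\subset X$ with $Z^N\subset\mathcal{F}\mathrm{Rec}(T_{(N)})$ for every $N\in\mathbb{N}$.
   Context: $x$ is recurrent if $x\in\overline{\{T^nx:n\geq1\}}$. If $X$ is complex, $\mathcal{E}(T)=\{x\neq0: Tx=\lambda x \text{ for some } \lambda\in\mathbb{C},|\lambda|=1\}$ (unimodular eigenvectors). If $X$ is real, let $\widetilde X=\{x+iy:x,y\in X\}\cong X\oplus X$ with complex scalar multiplication $(\alpha+i\beta)(x+iy)=(\alpha x-\beta y)+i(\alpha y+\beta x)$ and $\widetilde T(x+iy)=Tx+iTy$; then $\mathcal{E}(T)=\{x\in X:\exists y\in X,\ x+iy\in\mathcal{E}(\widetilde T)\}$. A Furstenberg family is a collection $\mathcal{F}$ of infinite subsets of $\mathbb{N}_0$, closed under supersets, with $A\cap[n,\infty)\in\mathcal{F}$ whenever $A\in\mathcal{F}$, $n\in\mathbb{N}$. $\mathcal{F}\mathrm{Rec}(S)$ is the set of $y$ such that $\{n\geq0:S^ny\in U\}\in\mathcal{F}$ for every neighbourhood $U$ of $y$. $T_{(N)}=T\oplus\cdots\oplus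 T$ on $X^N$. *)

theory Defs
  imports "HOL-Analysis.Analysis"
begin

definition F_space :: "('k::real_normed_field \<Rightarrow> 'a::{ab_group_add,metric_space} \<Rightarrow> 'a) \<Rightarrow> bool" where
  "F_space sc \<longleftrightarrow>
     vector_space sc \<and>
     (\<forall>x y z::'a. dist (x + z) (y + z) = dist x y) \<and>
     complete (UNIV :: 'a set) \<and>
     continuous_on UNIV (\<lambda>p::'a \<times> 'a. fst p + snd p) \<and>
     continuous_on UNIV (\<lambda>p::'k \<times> 'a. sc (fst p) (snd p))"

definition separable_space :: "'a::topological_space itself \<Rightarrow> bool" where
  "separable_space _ \<longleftrightarrow> (\<exists>D::'a set. countable D \<and> closure D = UNIV)"

definition fin_dim_span :: "('k::field \<Rightarrow> 'a::ab_group_add \<Rightarrow> 'a) \<Rightarrow> 'a set \<Rightarrow> bool" where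
  "fin_dim_span sc S \<longleftrightarrow> (\<exists>B. finite B \<and> module.span sc B = module.span sc S)"

definition infinite_dimensional :: "('k::field \<Rightarrow> 'a::ab_group_add \<Rightarrow> 'a) \<Rightarrow> 'a set \<Rightarrow> bool" where
  "infinite_dimensional sc Z \<longleftrightarrow> \<not> (\<exists>B. finite B \<and> module.span sc B = Z)"

definition recurrent :: "('a::topological_space \<Rightarrow> 'a) \<Rightarrow> 'a \<Rightarrow> bool" where
  "recurrent T x \<longleftrightarrow> x \<in> closure {(T ^^ n) x | n. n \<ge> 1}"

definition unimod_eigvecs_C :: "(complex \<Rightarrow> 'a::ab_group_add \<Rightarrow> 'a) \<Rightarrow> ('a \<Rightarrow> 'a) \<Rightarrow> 'a set" where
  "unimod_eigvecs_C sc T = {x. x \<noteq> 0 \<and> (\<exists>c. cmod c = 1 \<and> T x = sc c x)}"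

text \<open>Complexification X + iX of a real space X, represented as X \<times> X with
  (\<alpha> + i\<beta>)(x + iy) = (\<alpha>x - \<beta>y) + i(\<alpha>y + \<beta>x), and \<open>T~(x+iy) = Tx + iTy\<close>.\<close>
definition cplx_scaleale :: "complex \<Rightarrow> ('a::real_vector \<times> 'a) \<Rightarrow> 'a \<times> 'a" where
  "cplx_scaleale c p = (Re c *\<^sub>R fst p - Im c *\<^sub>R snd p, Re c *\<^sub>R snd p + Im c *\<^sub>R fst p)"

definition cplx_op :: "('a \<Rightarrow> 'a) \<Rightarrow> ('a \<times> 'a) \<Rightarrow> 'a \<times> 'a" where
  "cplx_op T p = (T (fst p), T (snd p))"

definition unimod_eigvecs_R :: "('a::real_vector \<Rightarrow> 'a) \<Rightarrow> 'a set" where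
  "unimod_eigvecs_R T = {x. \<exists>y. (x, y) \<in> unimod_eigvecs_C cplx_scaleale (cplx_op T)}"

definition furstenberg_family :: "nat set set \<Rightarrow> bool" where
  "furstenberg_family \<F> \<longleftrightarrow>
     (\<forall>A\<in>\<F>. infinite A) \<and>
     (\<forall>A B. A \<in> \<F> \<and> A \<subseteq> B \<longrightarrow> B \<in> \<F>) \<and>
     (\<forall>A\<in>\<F>. \<forall>n\<ge>1. A \<inter> {n..} \<in> \<F>)"

definition FRec :: "nat set set \<Rightarrow> 'a topology \<Rightarrow> ('a \<Rightarrow> 'a) \<Rightarrow> 'a set" where
  "FRec \<F> X S = {y \<in> topspace X. \<forall>U. (\<exists>V. openin X V \<and> y \<in> V \<and> V \<subseteq> U) \<longrightarrow>
                    {n. (S ^^ n) y \<in> U} \<in> \<F>}"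

text \<open>X^N as functions on {..<N} (extensional) with the product topology, and T_(N).\<close>
definition power_top :: "nat \<Rightarrow> ('a::topological_space) itself \<Rightarrow> (nat \<Rightarrow> 'a) topology" where
  "power_top N _ = product_topology (\<lambda>_. euclidean) {..<N}"

definition op_power :: "nat \<Rightarrow> ('a \<Rightarrow> 'a) \<Rightarrow> (nat \<Rightarrow> 'a) \<Rightarrow> (nat \<Rightarrow> 'a)" where
  "op_power N T z = restrict (\<lambda>i. T (z i)) {..<N}"

end

theory Submission
  imports Defs "HOL-Computational_Algebra.Fundamental_Theorem_Algebra"
begin

text \<open>If the orbit of a recurrent vector \<open>x\<close> spans a finite-dimensional space, then \<open>x\<close> is
  annihilated by a nonzero polynomial in \<open>T\<close>; let \<open>m\<close> be one of least degree. Recurrence,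
  \<open>T^n\<^sub>k x \<rightarrow> x\<close>, passes to every vector \<open>q(T) x\<close>. For a root \<open>\<lambda>\<close> of \<open>m = (z - \<lambda>) q\<close> the vector
  \<open>u = q(T) x\<close> is a nonzero eigenvector, so \<open>\<lambda>^n\<^sub>k u \<rightarrow> u\<close>, which forces \<open>\<lambda>^n\<^sub>k \<rightarrow> 1\<close> and \<open>|\<lambda>| = 1\<close>.
  A double root would give \<open>w\<close> with \<open>T w = \<lambda> w + u\<close>, and then
  \<open>T^n\<^sub>k w - \<lambda>^n\<^sub>k w = n\<^sub>k \<lambda>^(n\<^sub>k - 1) u \<rightarrow> 0\<close>, impossible as the coefficient has modulus
  \<open>n\<^sub>k \<ge> 1\<close>. Hence \<open>m\<close> has simple unimodular roots and \<open>x\<close> is a sum of unimodular eigenvectors;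
  real spaces are handled through their complexification. Conversely, every unimodular eigenvector
  lies in a finite-dimensional invariant subspace.

  For an \<open>\<F>\<close>-recurrent \<open>x\<close> outside \<open>span \<E>(T)\<close>, the orbit of \<open>x\<close> therefore spans an
  infinite-dimensional invariant subspace \<open>Z\<close>, and each \<open>(z\<^sub>1, \<dots>, z\<^sub>N) \<in> Z^N\<close> is the image of \<open>x\<close>
  under \<open>y \<mapsto> (p\<^sub>1(T) y, \<dots>, p\<^sub>N(T) y)\<close>, a continuous map intertwining \<open>T\<close> and \<open>T\<^sub>(\<^sub>N\<^sub>)\<close>, which
  carries the \<open>\<F>\<close>-recurrence of \<open>x\<close> over.\<close>

section \<open>Recurrence and \<open>\<F>\<close>-recurrence\<close>

lemma tendsto_continuous_on_UNIV_pair: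
  assumes "continuous_on UNIV (\<lambda>p. g (fst p) (snd p))"
    and "(f \<longlongrightarrow> a) F" and "(h \<longlongrightarrow> b) F"
  shows "((\<lambda>k. g (f k) (h k)) \<longlongrightarrow> g a b) F"
proof -
  have "((\<lambda>k. (f k, h k)) \<longlongrightarrow> (a, b)) F"
    using assms(2,3) by (rule tendsto_Pair)
  from continuous_on_tendsto_compose[OF assms(1) this] show ?thesis
    by simp
qed

lemma recurrent_imp_return_times:
  fixes T :: "'a::metric_space \<Rightarrow> 'a"
  assumes "recurrent T x"
  obtains n :: "nat \<Rightarrow> nat" where "\<And>k. n k \<ge> 1" and "(\<lambda>k. (T ^^ n k) x) \<longlonglongrightarrow> x"
proof -
  from assms obtain f where f: "\<forall>k. f k \<in> {(T ^^ n) x | n. n \<ge> 1}" "f \<longlonglongrightarrow> x"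
    unfolding recurrent_def closure_sequential by blast
  then have "\<forall>k. \<exists>m. m \<ge> 1 \<and> f k = (T ^^ m) x"
    by blast
  then obtain n where n: "\<forall>k. n k \<ge> 1 \<and> f k = (T ^^ n k) x"
    by (rule choice[THEN exE])
  then have "f = (\<lambda>k. (T ^^ n k) x)"
    by auto
  with n f(2) that show ?thesis
    by blast
qed

lemma FRec_imp_recurrent:
  fixes T :: "'a::metric_space \<Rightarrow> 'a"
  assumes F: "furstenberg_family \<F>" and x: "x \<in> FRec \<F> euclidean T"
  shows "recurrent T x"
  unfolding recurrent_def closure_approachable
proof (intro allI impI)
  fix e :: real assume "e > 0"
  then have "{n. (T ^^ n) x \<in> ball x e} \<in> \<F>"
    using x unfolding FRec_def by (auto intro!: exI[of _ "ball x e"])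
  then have "infinite {n. (T ^^ n) x \<in> ball x e}"
    using F unfolding furstenberg_family_def by blast
  then obtain n where "(T ^^ n) x \<in> ball x e" "n \<ge> 1"
    unfolding infinite_nat_iff_unbounded_le by blast
  then show "\<exists>y\<in>{(T ^^ n) x |n. 1 \<le> n}. dist y x < e"
    by (auto simp: dist_commute)
qed

lemma FRec_intertwining_image:
  assumes F: "furstenberg_family \<F>" and x: "x \<in> FRec \<F> X S"
    and \<Phi>: "continuous_map X Y \<Phi>" and intertwines: "\<And>y. \<Phi> (S y) = R (\<Phi> y)"
  shows "\<Phi> x \<in> FRec \<F> Y R"
  unfolding FRec_def
proof (intro CollectI conjI allI impI)
  have "x \<in> topspace X"
    using x by (simp add: FRec_def)
  then show "\<Phi> x \<in> topspace Y"
    using \<Phi> by (auto simp: continuous_map_def)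
  fix U assume "\<exists>V. openin Y V \<and> \<Phi> x \<in> V \<and> V \<subseteq> U"
  then obtain V where V: "openin Y V" "\<Phi> x \<in> V" "V \<subseteq> U"
    by blast
  define W where "W = {y \<in> topspace X. \<Phi> y \<in> V}"
  have "openin X W"
    unfolding W_def using \<Phi> V(1) by (rule openin_continuous_map_preimage)
  moreover have "x \<in> W"
    using \<open>x \<in> topspace X\<close> V(2) by (simp add: W_def)
  ultimately have "{n. (S ^^ n) x \<in> W} \<in> \<F>"
    using x unfolding FRec_def by blast
  moreover have "(R ^^ n) (\<Phi> x) = \<Phi> ((S ^^ n) x)" for n
    by (induction n) (simp_all add: intertwines)
  then have "{n. (S ^^ n) x \<in> W} \<subseteq> {n. (R ^^ n) (\<Phi> x) \<in> U}"
    using V(3) by (auto simp: W_def)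
  ultimately show "{n. (R ^^ n) (\<Phi> x) \<in> U} \<in> \<F>"
    using F unfolding furstenberg_family_def by blast
qed

section \<open>Polynomials in a linear operator\<close>

locale linear_operator = vector_space scale
  for scale :: "'k::field \<Rightarrow> 'b::ab_group_add \<Rightarrow> 'b" +
  fixes T :: "'b \<Rightarrow> 'b"
  assumes linear_T: "Vector_Spaces.linear scale scale T"
begin

sublocale T: Vector_Spaces.linear scale scale T
  by (fact linear_T)

lemma funpow_T_zero [simp]: "(T ^^ n) 0 = 0"
  by (induction n) simp_all

lemma T_image_span_subset:
  assumes "T ` B \<subseteq> span B"
  shows "T ` span B \<subseteq> span B"
  using span_mono[OF assms] by (simp add: T.span_image[symmetric] span_span)

lemma orbit_subset_span:
  assumes "T ` B \<subseteq> span B" and "x \<in> span B"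
  shows "(T ^^ n) x \<in> span B"
  using assms(2)
proof (induction n)
  case (Suc n)
  then show ?case
    using T_image_span_subset[OF assms(1)] by auto
qed simp

lemma fin_dim_span_if_subset_span:
  assumes "finite B" and "S \<subseteq> span B"
  shows "fin_dim_span scale S"
proof -
  obtain C where C: "C \<subseteq> span S" "independent C" "span S \<subseteq> span C"
    by (rule basis_exists[of "span S"])
  have "span S \<subseteq> span B"
    using span_mono[OF assms(2)] by (simp only: span_span)
  then have "finite C"
    using independent_span_bound[OF assms(1) C(2)] C(1) by blast
  moreover have "span C = span S"
    using C(3) span_mono[OF C(1)] by (simp only: span_span)
  ultimately show ?thesis
    unfolding fin_dim_span_def by blast
qed

lemma fin_dim_span_orbit_if_in_span:
  assumes "x \<in> span E"
    and "\<And>e. e \<in> E \<Longrightarrow> \<exists>B. finite B \<and> e \<in> span B \<and> T ` B \<subseteq> span B"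
  shows "fin_dim_span scale (range (\<lambda>n. (T ^^ n) x))"
proof -
  let ?V = "{x. \<exists>B. finite B \<and> x \<in> span B \<and> T ` B \<subseteq> span B}"
  have "subspace ?V"
  proof (rule subspaceI)
    show "0 \<in> ?V"
      by (auto intro!: exI[of _ "{}"] simp: span_zero)
  next
    fix x y assume "x \<in> ?V" "y \<in> ?V"
    then obtain B C where "finite B" "x \<in> span B" "T ` B \<subseteq> span B"
      "finite C" "y \<in> span C" "T ` C \<subseteq> span C"
      by blast
    moreover have "span B \<subseteq> span (B \<union> C)" "span C \<subseteq> span (B \<union> C)"
      by (simp_all add: span_mono)
    ultimately show "x + y \<in> ?V"
      by (intro CollectI exI[of _ "B \<union> C"]) (auto intro: span_add)
  next
    fix c x assume "x \<in> ?V"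
    then show "scale c x \<in> ?V"
      by (auto intro: span_scale)
  qed
  then have "span E \<subseteq> ?V"
    using assms(2) by (intro span_minimal) auto
  then obtain B where "finite B" "x \<in> span B" "T ` B \<subseteq> span B"
    using assms(1) by blast
  then show ?thesis
    by (intro fin_dim_span_if_subset_span[of B]) (auto intro: orbit_subset_span)
qed

lemma funpow_T_eigenvector:
  assumes "T u = scale l u"
  shows "(T ^^ j) u = scale (l ^ j) u"
  by (induction j) (simp_all add: assms T.scale mult.commute)

lemma funpow_T_generalized_eigenvector:
  assumes Tw: "T w = u + scale l w" and Tu: "T u = scale l u"
  shows "(T ^^ j) w = scale (l ^ j) w + scale (of_nat j * l ^ (j - 1)) u"
proof (induction j)
  case (Suc j)
  have "(T ^^ Suc j) w = scale (l ^ j) (T w) + scale (of_nat j * l ^ (j - 1)) (T u)"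
    using Suc by (simp add: T.add T.scale)
  also have "\<dots> = scale (l ^ Suc j) w + scale (l ^ j + of_nat j * l ^ (j - 1) * l) u"
    by (simp add: Tw Tu scale_right_distrib scale_left_distrib mult.commute)
  also have "l ^ j + of_nat j * l ^ (j - 1) * l = of_nat (Suc j) * l ^ (Suc j - 1)"
    by (cases j) (simp_all add: algebra_simps)
  finally show ?case .
qed simp

text \<open>\<open>poly_op p\<close> is the operator \<open>p(T)\<close>, evaluated by Horner's scheme.\<close>

definition poly_op :: "'k poly \<Rightarrow> 'b \<Rightarrow> 'b" where
  "poly_op p = fold_coeffs (\<lambda>a f v. scale a v + T (f v)) p (\<lambda>v. 0)"

lemma poly_op_0 [simp]: "poly_op 0 v = 0"
  by (simp add: poly_op_def)

lemma poly_op_pCons [simp]: "poly_op (pCons a p) v = scale a v + T (poly_op p v)"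
  by (cases "a = 0 \<and> p = 0") (auto simp: poly_op_def)

lemma poly_op_linear_factor: "poly_op [:-l, 1:] v = T v - scale l v"
  by simp

lemma poly_op_add_vec: "poly_op p (v + w) = poly_op p v + poly_op p w"
  by (induction p) (simp_all add: T.add algebra_simps)

lemma poly_op_T: "poly_op p (T v) = T (poly_op p v)"
  by (induction p) (simp_all add: T.add T.scale)

lemma funpow_T_poly_op: "(T ^^ n) (poly_op p v) = poly_op p ((T ^^ n) v)"
  by (induction n) (simp_all add: poly_op_T)

lemma poly_op_add: "poly_op (p + q) v = poly_op p v + poly_op q v"
  by (induction p q rule: poly_induct2) (simp_all add: T.add scale_left_distrib algebra_simps)

lemma poly_op_smult: "poly_op (smult c p) v = scale c (poly_op p v)"
  by (induction p) (simp_all add: T.scale scale_right_distrib)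

lemma poly_op_diff: "poly_op (p - q) v = poly_op p v - poly_op q v"
  using poly_op_add[of p "-q" v] poly_op_smult[of "-1" q v] by simp

lemma poly_op_mult: "poly_op (p * q) v = poly_op p (poly_op q v)"
  by (induction p) (simp_all add: poly_op_add poly_op_smult)

lemma poly_op_monom: "poly_op (monom 1 n) v = (T ^^ n) v"
  by (induction n) (simp_all add: monom_0 monom_Suc)

lemma poly_op_eigenvector:
  assumes "T u = scale l u"
  shows "poly_op p u = scale (poly p l) u"
  by (induction p) (simp_all add: assms T.scale scale_left_distrib mult.commute)

lemma span_orbit_eq_poly_op:
  assumes "x \<in> span ((\<lambda>i. (T ^^ i) v) ` I)"
  shows "\<exists>p. (\<forall>i. coeff p i \<noteq> 0 \<longrightarrow> i \<in> I) \<and> x = poly_op p v"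
proof -
  let ?P = "{poly_op p v | p. \<forall>i. coeff p i \<noteq> 0 \<longrightarrow> i \<in> I}"
  have "subspace ?P"
  proof (rule subspaceI)
    show "0 \<in> ?P"
      by (rule CollectI, rule exI[of _ 0]) simp
  next
    fix x y assume "x \<in> ?P" "y \<in> ?P"
    then obtain p q where "x = poly_op p v" "\<forall>i. coeff p i \<noteq> 0 \<longrightarrow> i \<in> I"
      "y = poly_op q v" "\<forall>i. coeff q i \<noteq> 0 \<longrightarrow> i \<in> I"
      by blast
    then show "x + y \<in> ?P"
      by (intro CollectI exI[of _ "p + q"]) (force simp: poly_op_add)
  next
    fix c x assume "x \<in> ?P"
    then obtain p where "x = poly_op p v" "\<forall>i. coeff p i \<noteq> 0 \<longrightarrow> i \<in> I"
      by blast
    then show "scale c x \<in> ?P"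
      by (intro CollectI exI[of _ "smult c p"]) (auto simp: poly_op_smult)
  qed
  moreover have "(T ^^ i) v \<in> ?P" if "i \<in> I" for i
    using that by (intro CollectI exI[of _ "monom 1 i"]) (simp add: poly_op_monom coeff_monom)
  ultimately have "span ((\<lambda>i. (T ^^ i) v) ` I) \<subseteq> ?P"
    by (intro span_minimal) auto
  then show ?thesis
    using assms by blast
qed

lemma annihilating_poly_if_orbit_in_finite_span:
  assumes "finite B" and "range (\<lambda>n. (T ^^ n) v) \<subseteq> span B"
  obtains p where "p \<noteq> 0" and "poly_op p v = 0"
proof -
  define S where "S n = (\<lambda>i. (T ^^ i) v) ` {..<n}" for n
  have "\<exists>n. (T ^^ n) v \<in> span (S n)"
  proof (rule ccontr)
    assume new: "\<nexists>n. (T ^^ n) v \<in> span (S n)"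
    have independent: "independent (S n) \<and> card (S n) = n" for n
    proof (induction n)
      case (Suc n)
      have "S (Suc n) = insert ((T ^^ n) v) (S n)"
        by (simp add: S_def lessThan_Suc)
      moreover have "(T ^^ n) v \<notin> span (S n)"
        using new by blast
      moreover have "finite (S n)"
        by (simp add: S_def)
      moreover have "(T ^^ n) v \<notin> S n"
        using calculation(2) span_superset by blast
      ultimately show ?case
        using Suc by (simp add: independent_insertI)
    qed (simp add: S_def independent_empty)
    have "S (Suc (card B)) \<subseteq> span B"
      using assms(2) by (auto simp: S_def)
    then have "card (S (Suc (card B))) \<le> card B"
      using independent_span_bound[OF assms(1)] independent by blast
    with independent show False
      by simp
  qed
  then obtain n p where p: "\<forall>i. coeff p i \<noteq> 0 \<longrightarrow> i < n" "(T ^^ n) v = poly_op p v"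
    using span_orbit_eq_poly_op unfolding S_def by blast
  show ?thesis
  proof (rule that)
    have "coeff (monom 1 n - p) n = 1"
      using p(1) by auto
    then show "monom 1 n - p \<noteq> 0"
      by auto
    show "poly_op (monom 1 n - p) v = 0"
      using p(2) by (simp add: poly_op_diff poly_op_monom)
  qed
qed

lemma poly_op_split_simple_root:
  assumes "poly_op ([:-l, 1:] * q) v = 0" and "poly q l \<noteq> 0"
  defines "u \<equiv> scale (inverse (poly q l)) (poly_op q v)"
  shows "T u = scale l u" and "poly_op q (v - u) = 0"
proof -
  have "poly_op [:-l, 1:] (poly_op q v) = 0"
    using assms(1) by (simp only: poly_op_mult)
  then have "T (poly_op q v) = scale l (poly_op q v)"
    by simp
  then show Tu: "T u = scale l u"
    by (simp add: u_def T.scale)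
  have "poly_op q u = poly_op q v"
    using poly_op_eigenvector[OF Tu, of q] assms(2) by (simp add: u_def)
  then show "poly_op q (v - u) = 0"
    using poly_op_add_vec[of q "v - u" u] by simp
qed

lemma span_eigenvectors_if_annihilated:
  assumes "p \<noteq> 0" and "poly_op p v = 0"
    and "\<And>l. \<not> [:-l, 1:]^2 dvd p"
    and "\<And>q. q dvd p \<Longrightarrow> degree q > 0 \<Longrightarrow> \<exists>l. poly q l = 0"
  shows "v \<in> span {u. u \<noteq> 0 \<and> (\<exists>l. poly p l = 0 \<and> T u = scale l u)}"
  using assms
proof (induction "degree p" arbitrary: p v rule: less_induct)
  case (less p v)
  show ?case
  proof (cases "degree p = 0")
    case True
    then obtain c where "p = [:c:]" and "c \<noteq> 0"
      using less.prems(1) by (metis degree_eq_zeroE pCons_0_0)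
    then have "v = 0"
      using less.prems(2) by simp
    then show ?thesis
      by (simp add: span_zero)
  next
    case False
    then obtain l where "poly p l = 0"
      using less.prems(4)[OF dvd_refl] by blast
    then obtain q where p: "p = [:-l, 1:] * q"
      by (metis dvdE poly_eq_0_iff_dvd)
    have "q \<noteq> 0"
      using less.prems(1) p by auto
    have "poly q l \<noteq> 0"
    proof
      assume "poly q l = 0"
      then obtain r where "q = [:-l, 1:] * r"
        by (metis dvdE poly_eq_0_iff_dvd)
      have "[:-l, 1:]^2 dvd p"
        unfolding p \<open>q = [:-l, 1:] * r\<close> power2_eq_square mult.assoc[symmetric]
        by (rule dvd_triv_left)
      with less.prems(3) show False
        by blast
    qed
    define u where "u = scale (inverse (poly q l)) (poly_op q v)"
    have u: "T u = scale l u" and "poly_op q (v - u) = 0"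
      using poly_op_split_simple_root[OF less.prems(2)[unfolded p] \<open>poly q l \<noteq> 0\<close>]
      by (simp_all add: u_def)
    have "v - u \<in> span {u. u \<noteq> 0 \<and> (\<exists>l. poly q l = 0 \<and> T u = scale l u)}"
    proof (rule less.hyps)
      show "degree q < degree p"
        using degree_mult_eq[of "[:-l, 1:]" q] \<open>q \<noteq> 0\<close> by (simp add: p)
      show "\<not> [:-l', 1:]^2 dvd q" for l'
        using less.prems(3)[of l'] p by (meson dvd_mult)
      show "\<exists>l. poly r l = 0" if "r dvd q" "degree r > 0" for r
        using less.prems(4) that p by (meson dvd_mult dvd_trans)
    qed fact+
    moreover have "{u. u \<noteq> 0 \<and> (\<exists>l. poly q l = 0 \<and> T u = scale l u)}
        \<subseteq> {u. u \<noteq> 0 \<and> (\<exists>l. poly p l = 0 \<and> T u = scale l u)}"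
      by (auto simp: p)
    moreover have "u \<in> span {u. u \<noteq> 0 \<and> (\<exists>l. poly p l = 0 \<and> T u = scale l u)}"
      using u \<open>poly p l = 0\<close> by (cases "u = 0") (auto simp: span_zero intro: span_base)
    ultimately have "(v - u) + u \<in> span {u. u \<noteq> 0 \<and> (\<exists>l. poly p l = 0 \<and> T u = scale l u)}"
      by (meson span_add span_mono subsetD)
    then show ?thesis
      by simp
  qed
qed

definition min_annihilator :: "'k poly \<Rightarrow> 'b \<Rightarrow> bool" where
  "min_annihilator m v \<longleftrightarrow>
     m \<noteq> 0 \<and> poly_op m v = 0 \<and> (\<forall>p. p \<noteq> 0 \<and> poly_op p v = 0 \<longrightarrow> degree m \<le> degree p)"

lemma min_annihilator_exists:
  assumes "p \<noteq> 0" and "poly_op p v = 0"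
  obtains m where "min_annihilator m v"
  using ex_has_least_nat[of "\<lambda>p. p \<noteq> 0 \<and> poly_op p v = 0" p degree] assms that
  unfolding min_annihilator_def by blast

lemma min_annihilator_cofactor_nonzero:
  assumes "min_annihilator m v" and "m = q * r" and "degree q > 0"
  shows "poly_op r v \<noteq> 0"
proof
  assume "poly_op r v = 0"
  moreover have "r \<noteq> 0" and "q \<noteq> 0"
    using assms unfolding min_annihilator_def by auto
  ultimately have "degree m \<le> degree r"
    using assms(1) unfolding min_annihilator_def by blast
  with assms(2,3) \<open>r \<noteq> 0\<close> \<open>q \<noteq> 0\<close> show False
    by (simp add: degree_mult_eq)
qed

lemma min_annihilator_root_eigenvector:
  assumes "min_annihilator m v" and "m = [:-l, 1:] * q"
  shows "poly_op q v \<noteq> 0" and "T (poly_op q v) = scale l (poly_op q v)"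
proof -
  show "poly_op q v \<noteq> 0"
    using min_annihilator_cofactor_nonzero[OF assms] by simp
  have "poly_op [:-l, 1:] (poly_op q v) = 0"
    using assms unfolding min_annihilator_def by (simp only: poly_op_mult)
  then show "T (poly_op q v) = scale l (poly_op q v)"
    by simp
qed

end

section \<open>Continuous operators on topological vector spaces\<close>

locale topological_vector_space = vector_space scale
  for scale :: "'k::real_normed_field \<Rightarrow> 'b::{ab_group_add,metric_space} \<Rightarrow> 'b" +
  assumes continuous_add: "continuous_on UNIV (\<lambda>p::'b \<times> 'b. fst p + snd p)"
    and continuous_scale: "continuous_on UNIV (\<lambda>p::'k \<times> 'b. scale (fst p) (snd p))"
begin

lemma tendsto_vadd:
  fixes f g :: "'a \<Rightarrow> 'b"
  shows "(f \<longlongrightarrow> a) F \<Longrightarrow> (g \<longlongrightarrow> b) F \<Longrightarrow> ((\<lambda>k. f k + g k) \<longlongrightarrow> a + b) F"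
  using tendsto_continuous_on_UNIV_pair[OF continuous_add] .

lemma tendsto_vscale:
  fixes c :: "'a \<Rightarrow> 'k" and g :: "'a \<Rightarrow> 'b"
  shows "(c \<longlongrightarrow> a) F \<Longrightarrow> (g \<longlongrightarrow> b) F \<Longrightarrow> ((\<lambda>k. scale (c k) (g k)) \<longlongrightarrow> scale a b) F"
  using tendsto_continuous_on_UNIV_pair[OF continuous_scale] .

lemma tendsto_vdiff:
  fixes f g :: "'a \<Rightarrow> 'b"
  assumes "(f \<longlongrightarrow> a) F" and "(g \<longlongrightarrow> b) F"
  shows "((\<lambda>k. f k - g k) \<longlongrightarrow> a - b) F"
  using tendsto_vadd[OF assms(1) tendsto_vscale[OF tendsto_const[of "-1"] assms(2)]] by simp

end

locale tvs_operator = topological_vector_space scale + linear_operator scale T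
  for scale :: "'k::real_normed_field \<Rightarrow> 'b::{ab_group_add,metric_space} \<Rightarrow> 'b" and T +
  assumes continuous_T: "continuous_on UNIV T"
begin

lemma tendsto_T: "(f \<longlongrightarrow> a) F \<Longrightarrow> ((\<lambda>k. T (f k)) \<longlongrightarrow> T a) F"
  using continuous_on_tendsto_compose[OF continuous_T] by auto

lemma tendsto_poly_op: "(f \<longlongrightarrow> a) F \<Longrightarrow> ((\<lambda>k. poly_op p (f k)) \<longlongrightarrow> poly_op p a) F"
  by (induction p) (simp_all add: tendsto_vadd tendsto_vscale tendsto_T)

lemma continuous_poly_op: "continuous_on UNIV (poly_op p)"
  by (simp add: continuous_on_def tendsto_poly_op)

lemma return_times_poly_op:
  assumes "(\<lambda>k. (T ^^ n k) v) \<longlonglongrightarrow> v"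
  shows "(\<lambda>k. (T ^^ n k) (poly_op p v)) \<longlonglongrightarrow> poly_op p v"
  using tendsto_poly_op[OF assms] by (simp add: funpow_T_poly_op)

lemma FRec_power_span_orbit:
  assumes F: "furstenberg_family \<F>" and x: "x \<in> FRec \<F> euclidean T"
    and z: "z \<in> PiE {..<N} (\<lambda>_. span (range (\<lambda>n. (T ^^ n) x)))"
  shows "z \<in> FRec \<F> (power_top N TYPE('b)) (op_power N T)"
proof -
  have "\<forall>i\<in>{..<N}. \<exists>p. z i = poly_op p x"
    using z span_orbit_eq_poly_op[of _ x UNIV] by (auto simp: PiE_iff)
  then obtain p where p: "\<And>i. i < N \<Longrightarrow> z i = poly_op (p i) x"
    by (metis lessThan_iff)
  define \<Phi> where "\<Phi> y = restrict (\<lambda>i. poly_op (p i) y) {..<N}" for y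
  have "\<Phi> x = z"
    using z p by (auto simp: \<Phi>_def PiE_iff extensional_def fun_eq_iff)
  moreover have "continuous_map euclidean (power_top N TYPE('b)) \<Phi>"
    unfolding power_top_def continuous_map_componentwise
    by (auto simp: \<Phi>_def continuous_poly_op)
  moreover have "\<Phi> (T y) = op_power N T (\<Phi> y)" for y
    by (auto simp: \<Phi>_def op_power_def poly_op_T)
  ultimately show ?thesis
    using FRec_intertwining_image[OF F x] by metis
qed

lemma FRec_invariant_subspace:
  assumes F: "furstenberg_family \<F>" and x: "x \<in> FRec \<F> euclidean T"
    and infinite: "\<not> fin_dim_span scale (range (\<lambda>n. (T ^^ n) x))"
  shows "\<exists>Z. subspace Z \<and> T ` Z \<subseteq> Z \<and> infinite_dimensional scale Z \<and>
           (\<forall>N\<ge>1. PiE {..<N} (\<lambda>_. Z) \<subseteq> FRec \<F> (power_top N TYPE('b)) (op_power N T))"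
proof (intro exI[of _ "span (range (\<lambda>n. (T ^^ n) x))"] conjI allI impI)
  let ?Z = "span (range (\<lambda>n. (T ^^ n) x))"
  show "subspace ?Z"
    by simp
  have "T ((T ^^ n) x) \<in> range (\<lambda>n. (T ^^ n) x)" for n
    using rangeI[of "\<lambda>n. (T ^^ n) x" "Suc n"] by simp
  then have "T ` range (\<lambda>n. (T ^^ n) x) \<subseteq> range (\<lambda>n. (T ^^ n) x)"
    by auto
  then show "T ` ?Z \<subseteq> ?Z"
    by (meson T_image_span_subset span_superset subset_trans)
  show "infinite_dimensional scale ?Z"
    using infinite unfolding infinite_dimensional_def fin_dim_span_def by blast
  show "PiE {..<N} (\<lambda>_. ?Z) \<subseteq> FRec \<F> (power_top N TYPE('b)) (op_power N T)" for N
    using FRec_power_span_orbit[OF F x] by blast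
qed

end

lemma tvs_operator_if_F_space:
  fixes sc :: "'k::real_normed_field \<Rightarrow> 'b::{ab_group_add,metric_space} \<Rightarrow> 'b"
  assumes "F_space sc" and "Vector_Spaces.linear sc sc T" and "continuous_on UNIV T"
  shows "tvs_operator sc T"
  using assms unfolding F_space_def
  by (intro tvs_operator.intro tvs_operator_axioms.intro topological_vector_space.intro
      topological_vector_space_axioms.intro linear_operator.intro linear_operator_axioms.intro) auto

section \<open>Complex scalars\<close>

lemma norm_eq_1_if_powers_tendsto_1:
  fixes l :: "'a::real_normed_div_algebra"
  assumes n: "\<And>k. n k \<ge> 1" and lim: "(\<lambda>k. l ^ n k) \<longlonglongrightarrow> 1"
  shows "norm l = 1"
proof -
  have norm_lim: "(\<lambda>k. norm l ^ n k) \<longlonglongrightarrow> 1"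
    using tendsto_norm[OF lim] by (simp add: norm_power)
  show ?thesis
  proof (cases "norm l \<le> 1")
    case True
    then have "norm l ^ n k \<le> norm l" for k
      using power_decreasing[of 1 "n k" "norm l"] n by simp
    then have "1 \<le> norm l"
      using tendsto_upperbound[OF norm_lim] by simp
    with True show ?thesis
      by simp
  next
    case False
    then have "norm l ^ n k \<ge> norm l" for k
      using power_increasing[of 1 "n k" "norm l"] n by simp
    then have "norm l \<le> 1"
      using tendsto_lowerbound[OF norm_lim] by simp
    with False show ?thesis
      by simp
  qed
qed

locale complex_tvs_operator = tvs_operator scale T
  for scale :: "complex \<Rightarrow> 'b::{ab_group_add,metric_space} \<Rightarrow> 'b" and T
begin

lemma tendsto_0_if_scale_tendsto_0:
  assumes lim: "(\<lambda>k. scale (a k) v) \<longlonglongrightarrow> 0" and "v \<noteq> 0"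
  shows "a \<longlonglongrightarrow> 0"
proof (rule ccontr)
  assume "\<not> a \<longlonglongrightarrow> 0"
  then obtain e where "e > 0" and "\<exists>\<^sub>F k in sequentially. norm (a k) \<ge> e"
    by (auto simp: tendsto_iff dist_norm not_eventually not_less)
  then obtain r :: "nat \<Rightarrow> nat" where r: "strict_mono r" "\<And>k. norm (a (r k)) \<ge> e"
    using infinite_enumerate
    by (metis (mono_tags) frequently_cofinite cofinite_eq_sequentially mem_Collect_eq)
  define b where "b k = inverse (a (r k))" for k
  have "norm (b k) \<le> inverse e" for k
    using r(2)[of k] \<open>e > 0\<close> by (simp add: b_def norm_inverse le_imp_inverse_le)
  then have "bounded (range b)"
    by (auto simp: bounded_iff)
  then obtain c q where q: "strict_mono q" "(b \<circ> q) \<longlonglongrightarrow> c"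
    using bounded_imp_convergent_subsequence by blast
  have "(\<lambda>k. scale (a (r (q k))) v) \<longlonglongrightarrow> 0"
    using LIMSEQ_subseq_LIMSEQ[OF lim strict_mono_o[OF r(1) q(1)]] by (simp add: o_def)
  from tendsto_vscale[OF q(2) this]
  have "(\<lambda>k. scale (b (q k)) (scale (a (r (q k))) v)) \<longlonglongrightarrow> 0"
    by (simp add: o_def)
  moreover have "a (r k) \<noteq> 0" for k
    using r(2)[of k] \<open>e > 0\<close> by auto
  ultimately have "(\<lambda>k. v) \<longlonglongrightarrow> 0"
    by (simp add: b_def)
  with \<open>v \<noteq> 0\<close> show False
    using LIMSEQ_const_iff by blast
qed

context
  fixes v :: 'b and n :: "nat \<Rightarrow> nat" and m :: "complex poly"
  assumes return: "(\<lambda>k. (T ^^ n k) v) \<longlonglongrightarrow> v" and n_pos: "\<And>k. n k \<ge> 1"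
    and min: "min_annihilator m v"
begin

lemma min_annihilator_root_powers_tendsto_1:
  assumes "poly m l = 0"
  shows "(\<lambda>k. l ^ n k) \<longlonglongrightarrow> 1"
proof -
  obtain q where m: "m = [:-l, 1:] * q"
    using assms by (metis dvdE poly_eq_0_iff_dvd)
  define u where "u = poly_op q v"
  have "u \<noteq> 0" and Tu: "T u = scale l u"
    using min_annihilator_root_eigenvector[OF min m] by (simp_all add: u_def)
  have "(\<lambda>k. scale (l ^ n k) u) \<longlonglongrightarrow> u"
    using return_times_poly_op[OF return, of q]
    unfolding u_def[symmetric] funpow_T_eigenvector[OF Tu] .
  from tendsto_vdiff[OF this tendsto_const[of u]]
  have "(\<lambda>k. scale (l ^ n k - 1) u) \<longlonglongrightarrow> 0"
    by (simp add: scale_left_diff_distrib)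
  from tendsto_0_if_scale_tendsto_0[OF this \<open>u \<noteq> 0\<close>] show ?thesis
    by (rule LIM_zero_cancel)
qed

lemma min_annihilator_root_unimodular: "poly m l = 0 \<Longrightarrow> cmod l = 1"
  using norm_eq_1_if_powers_tendsto_1 n_pos min_annihilator_root_powers_tendsto_1 by blast

lemma min_annihilator_no_double_root: "\<not> [:-l, 1:]^2 dvd m"
proof
  assume "[:-l, 1:]^2 dvd m"
  then obtain q where m: "m = [:-l, 1:] * ([:-l, 1:] * q)"
    by (metis dvdE power2_eq_square mult.assoc)
  then have "poly m l = 0"
    by simp
  then have l: "cmod l = 1" and l_powers: "(\<lambda>k. l ^ n k) \<longlonglongrightarrow> 1"
    using min_annihilator_root_unimodular min_annihilator_root_powers_tendsto_1 by blast+
  define w where "w = poly_op q v"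
  define u where "u = poly_op ([:-l, 1:] * q) v"
  have "u \<noteq> 0" and Tu: "T u = scale l u"
    using min_annihilator_root_eigenvector[OF min m] by (simp_all add: u_def)
  have "u = T w - scale l w"
    by (simp only: u_def w_def poly_op_mult poly_op_linear_factor)
  then have Tw: "T w = u + scale l w"
    by simp
  have "(\<lambda>k. (T ^^ n k) w) \<longlonglongrightarrow> w"
    unfolding w_def by (rule return_times_poly_op[OF return])
  from tendsto_vdiff[OF this tendsto_vscale[OF l_powers tendsto_const[of w]]]
  have "(\<lambda>k. (T ^^ n k) w - scale (l ^ n k) w) \<longlonglongrightarrow> 0"
    by simp
  then have "(\<lambda>k. scale (of_nat (n k) * l ^ (n k - 1)) u) \<longlonglongrightarrow> 0"
    by (simp add: funpow_T_generalized_eigenvector[OF Tw Tu])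
  then have "(\<lambda>k. of_nat (n k) * l ^ (n k - 1)) \<longlonglongrightarrow> 0"
    using \<open>u \<noteq> 0\<close> by (rule tendsto_0_if_scale_tendsto_0)
  then obtain k where "cmod (of_nat (n k) * l ^ (n k - 1)) < 1"
    using LIMSEQ_D[of _ 0 1] by fastforce
  moreover have "cmod (of_nat (n k) * l ^ (n k - 1)) \<ge> 1"
    using n_pos[of k] l by (simp add: norm_mult norm_power)
  ultimately show False
    by simp
qed

end

lemma recurrent_fin_dim_span_orbit_imp_span_unimod_eigvecs:
  assumes "recurrent T v" and "fin_dim_span scale (range (\<lambda>n. (T ^^ n) v))"
  shows "v \<in> span (unimod_eigvecs_C scale T)"
proof -
  obtain n where n_pos: "\<And>k. n k \<ge> 1" and return: "(\<lambda>k. (T ^^ n k) v) \<longlonglongrightarrow> v"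
    using recurrent_imp_return_times[OF assms(1)] by blast
  obtain B where "finite B" "range (\<lambda>n. (T ^^ n) v) \<subseteq> span B"
    using assms(2) span_superset unfolding fin_dim_span_def by metis
  then obtain m where min: "min_annihilator m v"
    by (metis annihilating_poly_if_orbit_in_finite_span min_annihilator_exists)
  have "v \<in> span {u. u \<noteq> 0 \<and> (\<exists>l. poly m l = 0 \<and> T u = scale l u)}"
  proof (rule span_eigenvectors_if_annihilated)
    show "m \<noteq> 0" "poly_op m v = 0"
      using min unfolding min_annihilator_def by blast+
    show "\<not> [:-l, 1:]^2 dvd m" for l
      using min_annihilator_no_double_root[OF return n_pos min] .
    show "\<exists>l. poly q l = 0" if "degree q > 0" for q :: "complex poly"
      using fundamental_theorem_of_algebra[of q] that by (simp add: constant_degree)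
  qed
  moreover have "{u. u \<noteq> 0 \<and> (\<exists>l. poly m l = 0 \<and> T u = scale l u)} \<subseteq> unimod_eigvecs_C scale T"
    using min_annihilator_root_unimodular[OF return n_pos min]
    by (auto simp: unimod_eigvecs_C_def)
  ultimately show ?thesis
    using span_mono by blast
qed

lemma recurrent_in_span_unimod_eigvecs_iff:
  assumes "recurrent T x"
  shows "x \<in> span (unimod_eigvecs_C scale T) \<longleftrightarrow> fin_dim_span scale (range (\<lambda>n. (T ^^ n) x))"
proof
  assume "x \<in> span (unimod_eigvecs_C scale T)"
  then show "fin_dim_span scale (range (\<lambda>n. (T ^^ n) x))"
  proof (rule fin_dim_span_orbit_if_in_span)
    fix e assume "e \<in> unimod_eigvecs_C scale T"
    then have "T ` {e} \<subseteq> span {e}"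
      by (auto simp: unimod_eigvecs_C_def span_base span_scale)
    then show "\<exists>B. finite B \<and> e \<in> span B \<and> T ` B \<subseteq> span B"
      by (intro exI[of _ "{e}"]) (simp add: span_base)
  qed
qed (use recurrent_fin_dim_span_orbit_imp_span_unimod_eigvecs assms in blast)

end

section \<open>Real scalars via the complexification\<close>

lemma span_real_eq: "span = module.span (scaleR :: real \<Rightarrow> 'a::real_vector \<Rightarrow> 'a)"
  by (simp add: span_raw_def)

lemma subspace_real_eq: "subspace = module.subspace (scaleR :: real \<Rightarrow> 'a::real_vector \<Rightarrow> 'a)"
  by (simp add: subspace_raw_def)

lemma vector_space_cplx_scaleale:
  "vector_space (cplx_scaleale :: complex \<Rightarrow> 'a::real_vector \<times> 'a \<Rightarrow> 'a \<times> 'a)"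
  by unfold_locales (simp_all add: cplx_scaleale_def algebra_simps)

locale real_tvs_operator = tvs_operator scaleR T
  for T :: "'b::{real_vector,metric_space} \<Rightarrow> 'b"
begin

lemma complex_tvs_operator_cplx_op: "complex_tvs_operator cplx_scaleale (cplx_op T)"
proof -
  interpret C: vector_space "cplx_scaleale :: complex \<Rightarrow> 'b \<times> 'b \<Rightarrow> 'b \<times> 'b"
    by (rule vector_space_cplx_scaleale)
  have linear: "Vector_Spaces.linear cplx_scaleale cplx_scaleale (cplx_op T)"
    by unfold_locales (simp_all add: cplx_op_def cplx_scaleale_def T.add T.scale T.diff)
  have "continuous_on UNIV (cplx_op T)"
    unfolding cplx_op_def by (intro continuous_intros continuous_on_compose2[OF continuous_T]) auto
  moreover have "continuous_on UNIV (\<lambda>p::('b \<times> 'b) \<times> ('b \<times> 'b). fst p + snd p)"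
    unfolding continuous_on_def plus_prod_def
    by (intro ballI tendsto_Pair tendsto_vadd tendsto_fst tendsto_snd tendsto_ident_at)
  moreover have "continuous_on UNIV (\<lambda>p::complex \<times> ('b \<times> 'b). cplx_scaleale (fst p) (snd p))"
    unfolding continuous_on_def cplx_scaleale_def
    by (intro ballI tendsto_Pair tendsto_vadd tendsto_vdiff tendsto_vscale tendsto_Re tendsto_Im
        tendsto_fst tendsto_snd tendsto_ident_at)
  ultimately show ?thesis
    using linear vector_space_cplx_scaleale
    by (intro complex_tvs_operator.intro tvs_operator.intro tvs_operator_axioms.intro
        topological_vector_space.intro topological_vector_space_axioms.intro
        linear_operator.intro linear_operator_axioms.intro)
qed

sublocale C: complex_tvs_operator cplx_scaleale "cplx_op T"
  by (rule complex_tvs_operator_cplx_op)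

lemma funpow_cplx_op: "(cplx_op T ^^ n) (x, y) = ((T ^^ n) x, (T ^^ n) y)"
  by (induction n) (simp_all add: cplx_op_def)

lemma recurrent_cplx_op:
  assumes "recurrent T x"
  shows "recurrent (cplx_op T) (x, 0)"
proof -
  let ?S = "{(T ^^ n) x | n. n \<ge> 1}"
  have "(x, 0) \<in> (\<lambda>p. (p, 0)) ` closure ?S"
    using assms unfolding recurrent_def by (rule imageI)
  also have "\<dots> \<subseteq> closure ((\<lambda>p. (p, 0)) ` ?S)"
    by (intro image_closure_subset continuous_intros closed_closure closure_subset)
  also have "(\<lambda>p. (p, 0)) ` ?S = {(cplx_op T ^^ n) (x, 0) | n. n \<ge> 1}"
    by (auto simp: funpow_cplx_op)
  finally show ?thesis
    unfolding recurrent_def .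
qed

lemma span_cplx_embedding:
  assumes "y \<in> span B"
  shows "(y, 0) \<in> C.span ((\<lambda>b. (b, 0)) ` B)"
proof -
  have "subspace {y. (y, 0) \<in> C.span ((\<lambda>b. (b, 0)) ` B)}"
  proof (rule subspaceI)
    show "0 \<in> {y. (y, 0) \<in> C.span ((\<lambda>b. (b, 0)) ` B)}"
      using C.span_zero by (simp add: zero_prod_def)
  next
    fix a b assume "a \<in> {y. (y, 0) \<in> C.span ((\<lambda>b. (b, 0)) ` B)}" "b \<in> {y. (y, 0) \<in> C.span ((\<lambda>b. (b, 0)) ` B)}"
    then show "a + b \<in> {y. (y, 0) \<in> C.span ((\<lambda>b. (b, 0)) ` B)}"
      using C.span_add by fastforce
  next
    fix c :: real and a assume "a \<in> {y. (y, 0) \<in> C.span ((\<lambda>b. (b, 0)) ` B)}"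
    then have "cplx_scaleale (complex_of_real c) (a, 0) \<in> C.span ((\<lambda>b. (b, 0)) ` B)"
      by (simp add: C.span_scale)
    then show "c *\<^sub>R a \<in> {y. (y, 0) \<in> C.span ((\<lambda>b. (b, 0)) ` B)}"
      by (simp add: cplx_scaleale_def)
  qed
  moreover have "B \<subseteq> {y. (y, 0) \<in> C.span ((\<lambda>b. (b, 0)) ` B)}"
    by (auto intro: C.span_base)
  ultimately show ?thesis
    using assms span_minimal by blast
qed

text \<open>Multiplying by \<open>-i\<close> swaps the two components of a complex eigenvector up to sign,
  so both components of each unimodular eigenvector of the complexification are in \<open>\<E>(T)\<close>.\<close>

lemma span_unimod_eigvecs_cplx_components:
  assumes "w \<in> C.span (unimod_eigvecs_C cplx_scaleale (cplx_op T))"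
  shows "fst w \<in> span (unimod_eigvecs_R T) \<and> snd w \<in> span (unimod_eigvecs_R T)"
  using assms
proof (induction rule: C.span_induct)
  case base
  show ?case
    by (rule C.subspaceI) (auto simp: cplx_scaleale_def span_zero span_add span_diff span_scale)
next
  case (step e)
  obtain a b where e: "e = (a, b)"
    by fastforce
  from step obtain l where "e \<noteq> 0" "cmod l = 1" "cplx_op T e = cplx_scaleale l e"
    unfolding unimod_eigvecs_C_def by blast
  then have "(b, - a) \<noteq> 0" and "cplx_op T (b, - a) = cplx_scaleale l (b, - a)"
    by (auto simp: e zero_prod_def cplx_op_def cplx_scaleale_def T.neg algebra_simps)
  with \<open>cmod l = 1\<close> have "(b, - a) \<in> unimod_eigvecs_C cplx_scaleale (cplx_op T)"
    by (auto simp: unimod_eigvecs_C_def)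
  then have "b \<in> unimod_eigvecs_R T"
    by (auto simp: unimod_eigvecs_R_def)
  moreover have "a \<in> unimod_eigvecs_R T"
    using step e by (auto simp: unimod_eigvecs_R_def)
  ultimately show ?case
    by (simp add: e span_base)
qed

lemma recurrent_in_span_unimod_eigvecs_R_iff:
  assumes "recurrent T x"
  shows "x \<in> span (unimod_eigvecs_R T) \<longleftrightarrow> fin_dim_span scaleR (range (\<lambda>n. (T ^^ n) x))"
proof
  assume "x \<in> span (unimod_eigvecs_R T)"
  then show "fin_dim_span scaleR (range (\<lambda>n. (T ^^ n) x))"
  proof (rule fin_dim_span_orbit_if_in_span)
    fix s assume "s \<in> unimod_eigvecs_R T"
    then obtain y l where Ts: "T s = Re l *\<^sub>R s - Im l *\<^sub>R y" and Ty: "T y = Re l *\<^sub>R y + Im l *\<^sub>R s"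
      by (auto simp: unimod_eigvecs_R_def unimod_eigvecs_C_def cplx_op_def cplx_scaleale_def)
    have "s \<in> span {s, y}" and "y \<in> span {s, y}"
      by (simp_all add: span_base)
    then have "T s \<in> span {s, y}" and "T y \<in> span {s, y}"
      unfolding Ts Ty by (simp_all add: span_add span_diff span_scale)
    then have "T ` {s, y} \<subseteq> span {s, y}"
      by simp
    then show "\<exists>B. finite B \<and> s \<in> span B \<and> T ` B \<subseteq> span B"
      by (intro exI[of _ "{s, y}"]) (auto intro: span_base)
  qed
next
  assume "fin_dim_span scaleR (range (\<lambda>n. (T ^^ n) x))"
  then obtain B where "finite B" and orbit: "range (\<lambda>n. (T ^^ n) x) \<subseteq> span B"
    unfolding fin_dim_span_def by (metis span_superset)
  have "range (\<lambda>n. (cplx_op T ^^ n) (x, 0)) \<subseteq> C.span ((\<lambda>b. (b, 0)) ` B)"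
    using span_cplx_embedding orbit by (auto simp: funpow_cplx_op)
  then have "fin_dim_span cplx_scaleale (range (\<lambda>n. (cplx_op T ^^ n) (x, 0)))"
    using \<open>finite B\<close> by (intro C.fin_dim_span_if_subset_span) auto
  then have "(x, 0) \<in> C.span (unimod_eigvecs_C cplx_scaleale (cplx_op T))"
    using C.recurrent_in_span_unimod_eigvecs_iff recurrent_cplx_op[OF assms] by blast
  then show "x \<in> span (unimod_eigvecs_R T)"
    using span_unimod_eigvecs_cplx_components by fastforce
qed

end

theorem mainTheorem15:
  shows
  \<comment> \<open>real F-spaces\<close>
  "(F_space (scaleR :: real \<Rightarrow> 'a::{real_vector,metric_space} \<Rightarrow> 'a) \<and>
    separable_space TYPE('a) \<and> infinite_dimensional scaleR (UNIV :: 'a set) \<longrightarrow>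
    (\<forall>T :: 'a \<Rightarrow> 'a. linear T \<and> continuous_on UNIV T \<longrightarrow>
       (\<forall>x. recurrent T x \<longrightarrow>
          (x \<in> span (unimod_eigvecs_R T) \<longleftrightarrow> fin_dim_span scaleR (range (\<lambda>n. (T ^^ n) x))))
     \<and> (\<forall>\<F>. furstenberg_family \<F> \<and> FRec \<F> euclidean T - span (unimod_eigvecs_R T) \<noteq> {} \<longrightarrow>
          (\<exists>Z. subspace Z \<and> T ` Z \<subseteq> Z \<and> infinite_dimensional scaleR Z \<and>
               (\<forall>N\<ge>1. PiE {..<N} (\<lambda>_. Z) \<subseteq> FRec \<F> (power_top N TYPE('a)) (op_power N T))))))
   \<and>
  \<comment> \<open>complex F-spaces\<close>
  (\<forall>sc :: complex \<Rightarrow> 'b::{ab_group_add,metric_space} \<Rightarrow> 'b.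
    F_space sc \<and> separable_space TYPE('b) \<and> infinite_dimensional sc (UNIV :: 'b set) \<longrightarrow>
    (\<forall>T :: 'b \<Rightarrow> 'b. Vector_Spaces.linear sc sc T \<and> continuous_on UNIV T \<longrightarrow>
       (\<forall>x. recurrent T x \<longrightarrow>
          (x \<in> module.span sc (unimod_eigvecs_C sc T) \<longleftrightarrow>
           fin_dim_span sc (range (\<lambda>n. (T ^^ n) x))))
     \<and> (\<forall>\<F>. furstenberg_family \<F> \<and>
             FRec \<F> euclidean T - module.span sc (unimod_eigvecs_C sc T) \<noteq> {} \<longrightarrow>
          (\<exists>Z. module.subspace sc Z \<and> T ` Z \<subseteq> Z \<and> infinite_dimensional sc Z \<and>
               (\<forall>N\<ge>1. PiE {..<N} (\<lambda>_. Z) \<subseteq> FRec \<F> (power_top N TYPE('b)) (op_power N T))))))"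
proof (intro conjI allI impI, goal_cases)
  case (1 T x)
  then interpret real_tvs_operator T
    by (intro real_tvs_operator.intro tvs_operator_if_F_space) (auto simp: linear_def)
  show ?case
    using recurrent_in_span_unimod_eigvecs_R_iff[OF 1(3)] by (simp add: span_real_eq)
next
  case (2 T \<F>)
  then interpret real_tvs_operator T
    by (intro real_tvs_operator.intro tvs_operator_if_F_space) (auto simp: linear_def)
  obtain x where x: "x \<in> FRec \<F> euclidean T" "x \<notin> span (unimod_eigvecs_R T)"
    using 2(3) by blast
  then have "\<not> fin_dim_span scaleR (range (\<lambda>n. (T ^^ n) x))"
    using 2(3) FRec_imp_recurrent recurrent_in_span_unimod_eigvecs_R_iff by (auto simp: span_real_eq)
  with x 2(3) show ?case
    using FRec_invariant_subspace by (simp add: subspace_real_eq)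
next
  case (3 sc T x)
  then interpret complex_tvs_operator sc T
    by (intro complex_tvs_operator.intro tvs_operator_if_F_space) auto
  show ?case
    using recurrent_in_span_unimod_eigvecs_iff[OF 3(3)] .
next
  case (4 sc T \<F>)
  then interpret complex_tvs_operator sc T
    by (intro complex_tvs_operator.intro tvs_operator_if_F_space) auto
  obtain x where x: "x \<in> FRec \<F> euclidean T" "x \<notin> span (unimod_eigvecs_C sc T)"
    using 4(3) by blast
  then have "\<not> fin_dim_span sc (range (\<lambda>n. (T ^^ n) x))"
    using 4(3) FRec_imp_recurrent recurrent_in_span_unimod_eigvecs_iff by blast
  with x 4(3) show ?case
    using FRec_invariant_subspace by blast
qed

end
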